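(* Let $G$ be a graph that is both weakly $4$-choosable and $\{1,1,2\}$-choosable. If $L$ is an assignment of $G$ with $|L(v)|=4$ for all $v$ (colours being integers) and $\|L\|=3$, then $G$ has a proper colouring $f$ with $f(v)\in L(v)$ for all $v$.
   Context: $\|L\|=|\{L(x):x\in V(G)\}|$ is the number of distinct lists. A set $I$ of integers is symmetric if $i\in I$ implies $-i\in I$. $G$ is weakly $4$-choosable if it is $L$-colourable (has a proper colouring $f$ with $f(v)\in L(v)$) for every assignment $L$ in which each $L(v)$ is a symmetric set of $4$ integers. For a partition $\lambda=\{k_1,\dots,k_q\}$ of $k$, a $\lambda$-assignment of $G$ is an assignment $L$ with $|L(v)|=k$ for all $v$ such that $\bigcup_vL(v)$ can be partitioned into sets $C_1,\dots,C_q$ with $|L(v)\cap C_i|=k_i$ for all $v$ and $i$; $G$ is $\lambda$-choosable if it is $L$-colourable for every $\lambda$-assignment $L$. *)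

theory Defs
  imports Main
begin

text \<open>A finite simple graph: finite vertex set V, symmetric irreflexive adjacency E
  (only edges between vertices of V matter).\<close>
definition graph :: "'a set \<Rightarrow> ('a \<Rightarrow> 'a \<Rightarrow> bool) \<Rightarrow> bool" where
  "graph V E \<longleftrightarrow> finite V \<and> (\<forall>u v. E u v \<longrightarrow> E v u) \<and> (\<forall>v. \<not> E v v)"

definition L_colouring :: "'a set \<Rightarrow> ('a \<Rightarrow> 'a \<Rightarrow> bool) \<Rightarrow> ('a \<Rightarrow> int set) \<Rightarrow> ('a \<Rightarrow> int) \<Rightarrow> bool" where
  "L_colouring V E L f \<longleftrightarrow>
     (\<forall>v\<in>V. f v \<in> L v) \<and> (\<forall>u\<in>V. \<forall>v\<in>V. E u v \<longrightarrow> f u \<noteq> f v)"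

definition L_colourable :: "'a set \<Rightarrow> ('a \<Rightarrow> 'a \<Rightarrow> bool) \<Rightarrow> ('a \<Rightarrow> int set) \<Rightarrow> bool" where
  "L_colourable V E L \<longleftrightarrow> (\<exists>f. L_colouring V E L f)"

definition symmetric_set :: "int set \<Rightarrow> bool" where
  "symmetric_set I \<longleftrightarrow> (\<forall>i\<in>I. - i \<in> I)"

definition weakly_4_choosable :: "'a set \<Rightarrow> ('a \<Rightarrow> 'a \<Rightarrow> bool) \<Rightarrow> bool" where
  "weakly_4_choosable V E \<longleftrightarrow>
     (\<forall>L. (\<forall>v\<in>V. symmetric_set (L v) \<and> finite (L v) \<and> card (L v) = 4) \<longrightarrow> L_colourable V E L)"

text \<open>lambda-assignment for a partition given as the list ks = [k_1,...,k_q] of k = sum ks: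
  the union of the lists is partitioned into C_0,...,C_(q-1) with |L(v) \<inter> C_i| = k_i.\<close>
definition lambda_assignment :: "nat list \<Rightarrow> 'a set \<Rightarrow> ('a \<Rightarrow> int set) \<Rightarrow> bool" where
  "lambda_assignment ks V L \<longleftrightarrow>
     (\<forall>v\<in>V. finite (L v) \<and> card (L v) = sum_list ks) \<and>
     (\<exists>C :: nat \<Rightarrow> int set.
        (\<Union>i<length ks. C i) = (\<Union>v\<in>V. L v) \<and>
        (\<forall>i<length ks. \<forall>j<length ks. i \<noteq> j \<longrightarrow> C i \<inter> C j = {}) \<and>
        (\<forall>v\<in>V. \<forall>i<length ks. card (L v \<inter> C i) = ks ! i))"

definition lambda_choosable :: "nat list \<Rightarrow> 'a set \<Rightarrow> ('a \<Rightarrow> 'a \<Rightarrow> bool) \<Rightarrow> bool" where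
  "lambda_choosable ks V E \<longleftrightarrow> (\<forall>L. lambda_assignment ks V L \<longrightarrow> L_colourable V E L)"

definition num_lists :: "'a set \<Rightarrow> ('a \<Rightarrow> int set) \<Rightarrow> nat" where
  "num_lists V L = card (L ` V)"

end

theory Submission imports Defs begin

text \<open>Let \<open>L\<close> take the values \<open>P, Q, R\<close>. A transversal, i.e. a set meeting each of them in
  exactly one colour, exists unless every colour lies in exactly two of the lists: otherwise some
  colour lies in all three, or in just one, say \<open>R\<close>, and then either \<open>P \<inter> Q \<noteq> {}\<close> or both \<open>P\<close>
  and \<open>Q\<close> have a colour outside \<open>R\<close>. Removing one transversal leaves three 3-sets, and sets of
  odd size always have a transversal, because every colour lying in exactly two of them would make
  the sum of their sizes even. Two disjoint transversals give a \<open>{1,1,2}\<close>-assignment. In the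
  exceptional case the pairwise intersections are disjoint 2-sets, and relabelling them as
  \<open>{\<plusminus>1}, {\<plusminus>2}, {\<plusminus>3}\<close> makes every list symmetric.\<close>

definition transversal :: "'b set set \<Rightarrow> 'b set \<Rightarrow> bool" where
  "transversal F T \<longleftrightarrow> (\<forall>X\<in>F. card (X \<inter> T) = 1)"

definition each_element_in_two :: "'b set \<Rightarrow> 'b set \<Rightarrow> 'b set \<Rightarrow> bool" where
  "each_element_in_two P Q R \<longleftrightarrow> P \<inter> Q \<inter> R = {} \<and> P \<subseteq> Q \<union> R \<and> Q \<subseteq> P \<union> R \<and> R \<subseteq> P \<union> Q"

lemma L_colourable_if_inj_image:
  assumes inj: "inj_on \<phi> (\<Union>v\<in>V. L v)" and col: "L_colourable V E (\<lambda>v. \<phi> ` L v)"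
  shows "L_colourable V E L"
proof -
  obtain g where "L_colouring V E (\<lambda>v. \<phi> ` L v) g"
    using col unfolding L_colourable_def by blast
  then have gV: "\<forall>v\<in>V. g v \<in> \<phi> ` L v" and gE: "\<forall>u\<in>V. \<forall>v\<in>V. E u v \<longrightarrow> g u \<noteq> g v"
    unfolding L_colouring_def by simp_all
  define f where "f v = the_inv_into (\<Union>v\<in>V. L v) \<phi> (g v)" for v
  have f: "f v \<in> L v \<and> \<phi> (f v) = g v" if "v \<in> V" for v
  proof -
    from gV that obtain x where "x \<in> L v" "g v = \<phi> x" by blast
    moreover from this have "f v = x"
      unfolding f_def using the_inv_into_f_f[OF inj, of x] that by auto
    ultimately show ?thesis by simp
  qed
  have "L_colouring V E L f"
    using f gE unfolding L_colouring_def by metis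
  then show ?thesis unfolding L_colourable_def by blast
qed

lemma L_colourable_if_lists_are_unions_of_pairs:
  fixes A B C :: "int set"
  assumes w4: "weakly_4_choosable V E"
    and "card A = 2" "card B = 2" "card C = 2"
    and "A \<inter> B = {}" "A \<inter> C = {}" "B \<inter> C = {}"
    and lists: "\<forall>v\<in>V. L v \<in> {A \<union> B, A \<union> C, B \<union> C}"
  shows "L_colourable V E L"
proof -
  obtain a a' where A: "A = {a, a'}" "a \<noteq> a'" using \<open>card A = 2\<close> unfolding card_2_iff by blast
  obtain b b' where B: "B = {b, b'}" "b \<noteq> b'" using \<open>card B = 2\<close> unfolding card_2_iff by blast
  obtain c c' where C: "C = {c, c'}" "c \<noteq> c'" using \<open>card C = 2\<close> unfolding card_2_iff by blast
  have distinct: "a \<noteq> b" "a \<noteq> b'" "a' \<noteq> b" "a' \<noteq> b'" "a \<noteq> c" "a \<noteq> c'" "a' \<noteq> c" "a' \<noteq> c'"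
    "b \<noteq> c" "b \<noteq> c'" "b' \<noteq> c" "b' \<noteq> c'"
    using assms(5-7) unfolding A B C by auto
  define \<phi> :: "int \<Rightarrow> int" where
    "\<phi> x = (if x = a then 1 else if x = a' then -1 else if x = b then 2 else if x = b' then -2
      else if x = c then 3 else -3)" for x
  have \<phi>: "\<phi> a = 1" "\<phi> a' = -1" "\<phi> b = 2" "\<phi> b' = -2" "\<phi> c = 3" "\<phi> c' = -3"
    using A(2) B(2) C(2) distinct unfolding \<phi>_def by auto
  have "inj_on \<phi> (A \<union> B \<union> C)"
    unfolding A B C using \<phi> by (auto simp: inj_on_def)
  moreover have "(\<Union>v\<in>V. L v) \<subseteq> A \<union> B \<union> C" using lists by blast
  ultimately have inj: "inj_on \<phi> (\<Union>v\<in>V. L v)" by (rule inj_on_subset)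
  have "symmetric_set (\<phi> ` L v) \<and> finite (\<phi> ` L v) \<and> card (\<phi> ` L v) = 4" if "v \<in> V" for v
  proof -
    have "L v = A \<union> B \<or> L v = A \<union> C \<or> L v = B \<union> C" using lists that by blast
    then have "\<phi> ` L v = {1, -1, 2, -2} \<or> \<phi> ` L v = {1, -1, 3, -3} \<or> \<phi> ` L v = {2, -2, 3, -3}"
      unfolding A B C by (elim disjE) (simp_all add: \<phi> insert_commute)
    then show ?thesis unfolding symmetric_set_def by (elim disjE) simp_all
  qed
  then have "L_colourable V E (\<lambda>v. \<phi> ` L v)"
    using w4 unfolding weakly_4_choosable_def by simp
  with inj show ?thesis by (rule L_colourable_if_inj_image)
qed

lemma card_eq_card_Int_add_card_Int:
  assumes "finite P" "P \<subseteq> Q \<union> R" "P \<inter> Q \<inter> R = {}"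
  shows "card P = card (P \<inter> Q) + card (P \<inter> R)"
proof -
  have "card ((P \<inter> Q) \<union> (P \<inter> R)) = card (P \<inter> Q) + card (P \<inter> R)"
    using assms(1,3) by (intro card_Un_disjoint) auto
  moreover have "(P \<inter> Q) \<union> (P \<inter> R) = P" using assms(2) by blast
  ultimately show ?thesis by simp
qed

lemma transversal_through_private_element:
  assumes "finite R" "card P = card R" "card Q = card R" "P \<inter> Q \<inter> R = {}"
    and "x \<in> R" "x \<notin> P" "x \<notin> Q"
  shows "\<exists>T \<subseteq> P \<union> Q \<union> R. transversal {P, Q, R} T"
proof (cases "P \<inter> Q = {}")
  case False
  then obtain y where "y \<in> P" "y \<in> Q" by blast
  then have "P \<inter> {x, y} = {y}" "Q \<inter> {x, y} = {y}" "R \<inter> {x, y} = {x}"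
    using assms(4-7) by auto
  then have "transversal {P, Q, R} {x, y}" unfolding transversal_def by simp
  moreover have "{x, y} \<subseteq> P \<union> Q \<union> R" using \<open>x \<in> R\<close> \<open>y \<in> P\<close> by blast
  ultimately show ?thesis by (intro exI[of _ "{x, y}"] conjI)
next
  case True
  have outside_R: "\<exists>p \<in> S. p \<notin> R" if "x \<notin> S" "card S = card R" for S
  proof (rule ccontr)
    assume "\<not> ?thesis"
    then have "S \<subseteq> R - {x}" using that(1) by blast
    then have "card S \<le> card R - 1"
      using assms(1,5) card_mono[of "R - {x}" S] by simp
    moreover have "card R \<noteq> 0" using assms(1,5) by auto
    ultimately show False using that(2) by simp
  qed
  obtain p where "p \<in> P" "p \<notin> R" using outside_R[of P] assms(2,6) by blast
  obtain q where "q \<in> Q" "q \<notin> R" using outside_R[of Q] assms(3,7) by blast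
  have "P \<inter> {x, p, q} = {p}" "Q \<inter> {x, p, q} = {q}" "R \<inter> {x, p, q} = {x}"
    using True assms(5-7) \<open>p \<in> P\<close> \<open>p \<notin> R\<close> \<open>q \<in> Q\<close> \<open>q \<notin> R\<close> by auto
  then have "transversal {P, Q, R} {x, p, q}" unfolding transversal_def by simp
  moreover have "{x, p, q} \<subseteq> P \<union> Q \<union> R" using \<open>x \<in> R\<close> \<open>p \<in> P\<close> \<open>q \<in> Q\<close> by blast
  ultimately show ?thesis by (intro exI[of _ "{x, p, q}"] conjI)
qed

lemma exists_transversal:
  assumes "finite P" "finite Q" "finite R" "card P = card R" "card Q = card R"
    and "\<not> each_element_in_two P Q R"
  shows "\<exists>T \<subseteq> P \<union> Q \<union> R. transversal {P, Q, R} T"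
proof -
  consider (common) x where "x \<in> P \<inter> Q \<inter> R"
    | (privateP) x where "P \<inter> Q \<inter> R = {}" "x \<in> P" "x \<notin> Q" "x \<notin> R"
    | (privateQ) x where "P \<inter> Q \<inter> R = {}" "x \<in> Q" "x \<notin> P" "x \<notin> R"
    | (privateR) x where "P \<inter> Q \<inter> R = {}" "x \<in> R" "x \<notin> P" "x \<notin> Q"
    using assms(6) unfolding each_element_in_two_def by blast
  then show ?thesis
  proof cases
    case common
    then have "transversal {P, Q, R} {x}" unfolding transversal_def by auto
    moreover have "{x} \<subseteq> P \<union> Q \<union> R" using common by blast
    ultimately show ?thesis by (intro exI[of _ "{x}"] conjI)
  next
    case privateP
    then have "\<exists>T \<subseteq> Q \<union> R \<union> P. transversal {Q, R, P} T"
      using assms by (intro transversal_through_private_element) (auto simp: Int_ac)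
    then show ?thesis by (simp add: insert_commute Un_ac)
  next
    case privateQ
    then have "\<exists>T \<subseteq> P \<union> R \<union> Q. transversal {P, R, Q} T"
      using assms by (intro transversal_through_private_element) (auto simp: Int_ac)
    then show ?thesis by (simp add: insert_commute Un_ac)
  next
    case privateR
    then show ?thesis using assms by (intro transversal_through_private_element) auto
  qed
qed

lemma card_eq_sums_if_each_element_in_two:
  assumes "finite P" "finite Q" "finite R" "each_element_in_two P Q R"
  shows "card P = card (P \<inter> Q) + card (P \<inter> R)" "card Q = card (P \<inter> Q) + card (Q \<inter> R)"
    "card R = card (P \<inter> R) + card (Q \<inter> R)"
proof -
  have "card P = card (P \<inter> Q) + card (P \<inter> R)" "card Q = card (Q \<inter> P) + card (Q \<inter> R)"
    "card R = card (R \<inter> P) + card (R \<inter> Q)"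
    using assms unfolding each_element_in_two_def by (intro card_eq_card_Int_add_card_Int; auto)+
  then show "card P = card (P \<inter> Q) + card (P \<inter> R)" "card Q = card (P \<inter> Q) + card (Q \<inter> R)"
    "card R = card (P \<inter> R) + card (Q \<inter> R)"
    by (simp_all add: Int_commute)
qed

lemma exists_transversal_of_odd_card:
  assumes "finite P" "finite Q" "finite R" "card P = card R" "card Q = card R" "odd (card R)"
  shows "\<exists>T \<subseteq> P \<union> Q \<union> R. transversal {P, Q, R} T"
proof (rule exists_transversal[OF assms(1-5)], rule notI)
  assume "each_element_in_two P Q R"
  then have "even (3 * card R)"
    using card_eq_sums_if_each_element_in_two[OF assms(1-3)] assms(4,5) by presburger
  then show False using assms(6) by simp
qed

lemma L_colourable_if_each_colour_in_two_lists:
  assumes "weakly_4_choosable V E" and lists: "\<forall>v\<in>V. L v \<in> {P, Q, R}"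
    and "finite P" "finite Q" "finite R" "card P = 4" "card Q = 4" "card R = 4"
    and two: "each_element_in_two P Q R"
  shows "L_colourable V E L"
proof (rule L_colourable_if_lists_are_unions_of_pairs[of V E "P \<inter> Q" "P \<inter> R" "Q \<inter> R"])
  show "card (P \<inter> Q) = 2" "card (P \<inter> R) = 2" "card (Q \<inter> R) = 2"
    using card_eq_sums_if_each_element_in_two[OF assms(3-5) two] assms(6-8) by simp_all
  have "P = (P \<inter> Q) \<union> (P \<inter> R)" "Q = (P \<inter> Q) \<union> (Q \<inter> R)" "R = (P \<inter> R) \<union> (Q \<inter> R)"
    using two unfolding each_element_in_two_def by blast+
  then show "\<forall>v\<in>V. L v \<in> {(P \<inter> Q) \<union> (P \<inter> R), (P \<inter> Q) \<union> (Q \<inter> R), (P \<inter> R) \<union> (Q \<inter> R)}"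
    using lists by simp
  show "(P \<inter> Q) \<inter> (P \<inter> R) = {}" "(P \<inter> Q) \<inter> (Q \<inter> R) = {}" "(P \<inter> R) \<inter> (Q \<inter> R) = {}"
    using two unfolding each_element_in_two_def by blast+
qed (fact assms(1))

lemma exists_disjoint_transversals:
  assumes "finite P" "finite Q" "finite R" "card P = card R" "card Q = card R" "even (card R)"
    and "\<not> each_element_in_two P Q R"
  shows "\<exists>T1 T2. transversal {P, Q, R} T1 \<and> transversal {P, Q, R} T2 \<and> T1 \<inter> T2 = {}"
proof -
  obtain T1 where T1: "transversal {P, Q, R} T1"
    using exists_transversal[OF assms(1-5,7)] by blast
  have card_minus_T1: "card (X - T1) = card R - 1" if "X \<in> {P, Q, R}" for X
    using T1 that assms(1-5) unfolding transversal_def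
    by (auto simp: card_Diff_subset_Int)
  have "card R \<noteq> 0" using T1 assms(3) unfolding transversal_def
    by (metis card.infinite card_0_eq card_mono inf_le1 insertCI zero_neq_one le_zero_eq)
  then have "odd (card R - 1)" using assms(6) by simp
  then obtain T2 where "T2 \<subseteq> (P - T1) \<union> (Q - T1) \<union> (R - T1)"
      and T2: "transversal {P - T1, Q - T1, R - T1} T2"
    using exists_transversal_of_odd_card[of "P - T1" "Q - T1" "R - T1"] assms(1-3) card_minus_T1
    by auto
  then have disjoint: "T1 \<inter> T2 = {}" by blast
  then have "(X - T1) \<inter> T2 = X \<inter> T2" for X by blast
  then have "transversal {P, Q, R} T2" using T2 unfolding transversal_def by simp
  then show ?thesis using T1 disjoint by blast
qed

lemma lambda_assignment_if_disjoint_transversals: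
  assumes lists: "\<forall>v\<in>V. finite (L v) \<and> card (L v) = k + 2"
    and T1: "transversal (L ` V) T1" and T2: "transversal (L ` V) T2" and "T1 \<inter> T2 = {}"
  shows "lambda_assignment [1, 1, k] V L"
proof -
  define U where "U = (\<Union>v\<in>V. L v)"
  define C where "C = (!) [T1 \<inter> U, T2 \<inter> U, U - (T1 \<union> T2)]"
  have indices: "i \<in> {0, 1, 2}" if "i < length [1, 1, k]" for i :: nat
    using that by auto
  have cards: "\<forall>v\<in>V. \<forall>i<length [1, 1, k]. card (L v \<inter> C i) = [1, 1, k] ! i"
  proof (intro ballI allI impI)
    fix v i assume "v \<in> V" "i < length [1, 1, k]"
    have "L v \<subseteq> U" using \<open>v \<in> V\<close> unfolding U_def by blast
    have one: "card (L v \<inter> T1) = 1" "card (L v \<inter> T2) = 1"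
      using T1 T2 \<open>v \<in> V\<close> unfolding transversal_def by auto
    have "L v \<inter> (U - (T1 \<union> T2)) = L v - ((L v \<inter> T1) \<union> (L v \<inter> T2))"
      using \<open>L v \<subseteq> U\<close> by blast
    moreover have "card ((L v \<inter> T1) \<union> (L v \<inter> T2)) = 2"
      using one lists \<open>v \<in> V\<close> \<open>T1 \<inter> T2 = {}\<close> by (subst card_Un_disjoint) auto
    ultimately have "card (L v \<inter> (U - (T1 \<union> T2))) = k"
      using lists \<open>v \<in> V\<close> by (simp add: card_Diff_subset)
    moreover have "L v \<inter> (T1 \<inter> U) = L v \<inter> T1" "L v \<inter> (T2 \<inter> U) = L v \<inter> T2"
      using \<open>L v \<subseteq> U\<close> by auto
    ultimately show "card (L v \<inter> C i) = [1, 1, k] ! i"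
      using indices[OF \<open>i < length [1, 1, k]\<close>] one unfolding C_def by auto
  qed
  have C: "C 0 = T1 \<inter> U" "C 1 = T2 \<inter> U" "C 2 = U - (T1 \<union> T2)"
    unfolding C_def by simp_all
  have disjoint: "\<forall>i<length [1, 1, k]. \<forall>j<length [1, 1, k]. i \<noteq> j \<longrightarrow> C i \<inter> C j = {}"
  proof (intro allI impI)
    fix i j assume "i < length [1, 1, k]" "j < length [1, 1, k]" "i \<noteq> j"
    then have "i \<in> {0, 1, 2}" "j \<in> {0, 1, 2}" "i \<noteq> j" using indices by blast+
    then show "C i \<inter> C j = {}" using C \<open>T1 \<inter> T2 = {}\<close> by auto
  qed
  have "(\<Union>i<length [1, 1, k]. C i) = U"
  proof -
    have "{..<length [1, 1, k]} = {0, 1, 2 :: nat}" by auto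
    then show ?thesis unfolding C_def by auto
  qed
  then show ?thesis
    unfolding lambda_assignment_def U_def using lists cards disjoint
    by (intro conjI exI[of _ C]) simp_all
qed

theorem theorem9:
  fixes V :: "'a set" and E :: "'a \<Rightarrow> 'a \<Rightarrow> bool" and L :: "'a \<Rightarrow> int set"
  assumes "graph V E"
    and "weakly_4_choosable V E"
    and "lambda_choosable [1, 1, 2] V E"
    and "\<forall>v\<in>V. finite (L v) \<and> card (L v) = 4"
    and "num_lists V L = 3"
  shows "L_colourable V E L"
proof -
  obtain P Q R where LV: "L ` V = {P, Q, R}"
    using assms(5) unfolding num_lists_def card_3_iff by (elim exE conjE) (rule that)
  have lists: "L v \<in> {P, Q, R}" if "v \<in> V" for v
    using that unfolding LV[symmetric] by (rule imageI)
  have fin: "finite X \<and> card X = 4" if "X \<in> {P, Q, R}" for X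
    using assms(4) that LV by (metis imageE)
  show ?thesis
  proof (cases "each_element_in_two P Q R")
    case True
    then show ?thesis
      using assms(2) lists fin by (intro L_colourable_if_each_colour_in_two_lists) auto
  next
    case False
    then obtain T1 T2 where "transversal {P, Q, R} T1" "transversal {P, Q, R} T2" "T1 \<inter> T2 = {}"
      using exists_disjoint_transversals[of P Q R] fin by auto
    then have "lambda_assignment [1, 1, 2] V L"
      using assms(4) unfolding LV[symmetric]
      by (intro lambda_assignment_if_disjoint_transversals) simp_all
    then show ?thesis using assms(3) unfolding lambda_choosable_def by blast
  qed
qed

end
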